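(* Let $d\ge 1$ and let $\mathcal{F}\subseteq \binom{\mathbb{N}}{d}$ be a finite compressed family. Then for every family $\mathcal{F}'\subseteq \binom{\mathbb{N}}{d}$ with $|\mathcal{F}'|=|\mathcal{F}|$ one has $|\mathrm{Inc}(\mathcal{F}')|\ge|\mathrm{Inc}(\mathcal{F})|$.
   Context: $\mathbb{N}=\{1,2,3,\dots\}$. For $d\ge1$, $\binom{\mathbb{N}}{d}$ is the set of $d$-element subsets of $\mathbb{N}$; an element is written $\mathbf{u}=(u_1,\ldots,u_d)$ with $u_1<\cdots<u_d$. The squashed order on $\binom{\mathbb{N}}{d}$: $\mathbf{u}<\mathbf{v}$ iff the largest element of the symmetric difference $(\mathbf{u}\setminus\mathbf{v})\cup(\mathbf{v}\setminus\mathbf{u})$ belongs to $\mathbf{v}$; it is a well-order. A finite family $\mathcal{F}\subseteq\binom{\mathbb{N}}{d}$ is compressed if it consists of the $|\mathcal{F}|$ smallest elements of $\binom{\mathbb{N}}{d}$ in the squashed order. Let $\mathrm{Inc}_1$ be the set of maps $\pi\colon\mathbb{N}\to\mathbb{N}$ with $\pi(j)<\pi(j+1)$ and $\pi(j)\le j+1$ for all $j\ge1$. Such $\pi$ acts on $\mathbf{u}\in\binom{\mathbb{N}}{d}$ by $\pi(\mathbf{u})=(\pi(u_1),\ldots,\pi(u_d))$. For $\mathcal{F}\subseteq\binom{\mathbb{N}}{d}$, its Inc-image is $\mathrm{Inc}(\mathcal{F})=\{\pi(\mathbf{u})\mid \mathbf{u}\in\mathcal{F},\ \pi\in\mathrm{Inc}_1\}$.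 *)

theory Defs
  imports Main
begin

text \<open>Positive naturals \<open>\<nat> = {1,2,...}\<close> are modelled as elements of type nat that are \<open>\<ge> 1\<close>.\<close>

definition binom_N :: "nat \<Rightarrow> nat set set" where
  "binom_N d = {u. finite u \<and> card u = d \<and> (\<forall>x\<in>u. 1 \<le> x)}"

definition squashed_less :: "nat set \<Rightarrow> nat set \<Rightarrow> bool" where
  "squashed_less u v \<longleftrightarrow> u \<noteq> v \<and> Max ((u - v) \<union> (v - u)) \<in> v"

text \<open>Compressed: F consists of the |F| smallest elements of binom_N d in squashed order,
  i.e. F is a finite initial segment (down-set) of the well-order.\<close>
definition compressed :: "nat \<Rightarrow> nat set set \<Rightarrow> bool" where
  "compressed d F \<longleftrightarrow> finite F \<and> F \<subseteq> binom_N d \<and>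
     (\<forall>u v. v \<in> F \<longrightarrow> u \<in> binom_N d \<longrightarrow> squashed_less u v \<longrightarrow> u \<in> F)"

text \<open>Inc_1: maps \<open>\<nat> \<rightarrow> \<nat>\<close> with \<open>\<pi>(j) < \<pi>(j+1)\<close> and \<open>\<pi>(j) \<le> j+1\<close> for all j \<ge> 1
  (values at 0 are irrelevant).\<close>
definition Inc1 :: "(nat \<Rightarrow> nat) set" where
  "Inc1 = {\<pi>. \<forall>j\<ge>1. 1 \<le> \<pi> j \<and> \<pi> j < \<pi> (j + 1) \<and> \<pi> j \<le> j + 1}"

definition Inc_image :: "nat set set \<Rightarrow> nat set set" where
  "Inc_image F = {\<pi> ` u | u \<pi>. u \<in> F \<and> \<pi> \<in> Inc1}"

end

theory Submission
  imports Defs "HOL.Binomial_Plus"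
begin

text \<open>A map in \<open>Inc\<^sub>1\<close> acts on a finite set of positive integers like the shift \<open>\<sigma>\<^sub>k\<close> that
  fixes everything below \<open>k\<close> and moves everything from \<open>k\<close> on up by one.
  Let \<open>L\<close> be the largest element used by a family \<open>F\<close> of \<open>d\<close>-sets. Then \<open>Inc(F)\<close> is the disjoint
  union of \<open>Inc(R) \<union> T\<close>, where \<open>R\<close> and \<open>T\<close> are the members avoiding and containing \<open>L\<close>, and of
  the sets \<open>w \<union> {L + 1}\<close> with \<open>w\<close> in the Inc-image of the link \<open>{u - {L} | u \<in> T}\<close>.
  For compressed \<open>F\<close> the family \<open>R\<close> consists of all \<open>d\<close>-subsets of \<open>{1..L-1}\<close> and the link is
  again compressed, so \<open>|Inc(F)|\<close> is bounded by an explicit function \<open>inc_count d |F|\<close> of the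
  cascade representation of \<open>|F|\<close>. For an arbitrary family, induction on \<open>d\<close> and \<open>|F|\<close> bounds
  \<open>|Inc(R) \<union> T|\<close> below by \<open>max (inc_count d |R|) |F|\<close> and the link part by
  \<open>inc_count (d-1) |T|\<close>, and a numerical inequality for \<open>inc_count\<close> shows that the sum is at least
  \<open>inc_count d |F|\<close>.\<close>

section \<open>Maps in \<open>Inc\<^sub>1\<close> act as shifts\<close>

definition shift :: "nat \<Rightarrow> nat \<Rightarrow> nat" where
  "shift k j = (if j < k then j else Suc j)"

definition shift_image :: "nat set set \<Rightarrow> nat set set" where
  "shift_image F = {shift k ` u | u k. u \<in> F \<and> 1 \<le> k}"

lemma shift_in_Inc1: "1 \<le> k \<Longrightarrow> shift k \<in> Inc1"
  unfolding Inc1_def shift_def by auto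

lemma inj_shift: "inj (shift k)"
  unfolding inj_def shift_def by auto

lemma Inc1_ge_self:
  assumes \<pi>: "\<pi> \<in> Inc1" and j: "1 \<le> j"
  shows "j \<le> \<pi> j"
  using j
proof (induction j rule: dec_induct)
  case base
  then show ?case using \<pi> unfolding Inc1_def by auto
next
  case (step n)
  then have "\<pi> n < \<pi> (Suc n)" using \<pi> unfolding Inc1_def by auto
  with step.IH show ?case by simp
qed

lemma Inc1_jump_persists:
  assumes \<pi>: "\<pi> \<in> Inc1" and j: "1 \<le> j" "\<pi> j = Suc j" and "j \<le> i"
  shows "\<pi> i = Suc i"
  using \<open>j \<le> i\<close>
proof (induction i rule: dec_induct)
  case base
  show ?case by (fact j(2))
next
  case (step n)
  have "\<pi> n < \<pi> (Suc n)" "\<pi> (Suc n) \<le> Suc (Suc n)"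
    using \<pi> j(1) step.hyps(1) unfolding Inc1_def by auto
  with step.IH show ?case by simp
qed

lemma Inc1_agrees_with_shift:
  assumes \<pi>: "\<pi> \<in> Inc1"
  obtains k where "1 \<le> k" "\<And>j. 1 \<le> j \<Longrightarrow> j \<le> N \<Longrightarrow> \<pi> j = shift k j"
proof -
  have stay: "\<pi> j = j" if "1 \<le> j" "\<pi> j \<noteq> Suc j" for j
  proof -
    have "\<pi> j \<le> Suc j" using \<pi> \<open>1 \<le> j\<close> unfolding Inc1_def by auto
    with Inc1_ge_self[OF \<pi> \<open>1 \<le> j\<close>] \<open>\<pi> j \<noteq> Suc j\<close> show ?thesis by linarith
  qed
  show ?thesis
  proof (cases "\<exists>j. 1 \<le> j \<and> \<pi> j = Suc j")
    case True
    define k where "k = (LEAST j. 1 \<le> j \<and> \<pi> j = Suc j)"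
    have k: "1 \<le> k" "\<pi> k = Suc k"
      using LeastI_ex[OF True] unfolding k_def by auto
    have "\<pi> j = shift k j" if "1 \<le> j" for j
    proof (cases "j < k")
      case True
      then have "\<pi> j \<noteq> Suc j" using not_less_Least \<open>1 \<le> j\<close> unfolding k_def by blast
      with True show ?thesis using stay \<open>1 \<le> j\<close> unfolding shift_def by simp
    next
      case False
      then show ?thesis using Inc1_jump_persists[OF \<pi> k] unfolding shift_def by simp
    qed
    with k(1) show ?thesis using that by blast
  next
    case False
    then have "\<pi> j = shift (Suc N) j" if "1 \<le> j" "j \<le> N" for j
      using stay that unfolding shift_def by auto
    then show ?thesis using that[of "Suc N"] by simp
  qed
qed

lemma Inc1_image_eq_shift_image:
  assumes "\<pi> \<in> Inc1" and u: "finite u" "\<forall>x\<in>u. 1 \<le> x"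
  obtains k where "1 \<le> k" "\<pi> ` u = shift k ` u"
proof -
  obtain k where k: "1 \<le> k" "\<And>j. 1 \<le> j \<Longrightarrow> j \<le> Max (insert 0 u) \<Longrightarrow> \<pi> j = shift k j"
    using Inc1_agrees_with_shift[OF assms(1)] by blast
  have "\<pi> x = shift k x" if "x \<in> u" for x
    using that u by (intro k(2)) auto
  then have "\<pi> ` u = shift k ` u" by (rule image_cong[OF refl])
  with k(1) show ?thesis using that by blast
qed

lemma Inc_image_eq_shift_image:
  assumes "\<forall>u\<in>F. finite u \<and> (\<forall>x\<in>u. 1 \<le> x)"
  shows "Inc_image F = shift_image F"
proof
  show "Inc_image F \<subseteq> shift_image F"
  proof
    fix v assume "v \<in> Inc_image F"
    then obtain u \<pi> where v: "v = \<pi> ` u" "u \<in> F" "\<pi> \<in> Inc1" unfolding Inc_image_def by auto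
    moreover have "finite u" "\<forall>x\<in>u. 1 \<le> x" using assms v(2) by auto
    ultimately obtain k where "1 \<le> k" "\<pi> ` u = shift k ` u"
      using Inc1_image_eq_shift_image by metis
    with v show "v \<in> shift_image F" unfolding shift_image_def by auto
  qed
  show "shift_image F \<subseteq> Inc_image F"
    unfolding shift_image_def Inc_image_def using shift_in_Inc1 by blast
qed

lemma shift_imageI: "u \<in> F \<Longrightarrow> 1 \<le> k \<Longrightarrow> shift k ` u \<in> shift_image F"
  unfolding shift_image_def by blast

lemma shift_image_mono: "F \<subseteq> G \<Longrightarrow> shift_image F \<subseteq> shift_image G"
  unfolding shift_image_def by blast

lemma shift_image_below: "\<forall>x\<in>u. x < k \<Longrightarrow> shift k ` u = u"
  unfolding shift_def by simp

lemma subset_shift_image: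
  assumes "\<forall>u\<in>F. finite u"
  shows "F \<subseteq> shift_image F"
proof
  fix u assume u: "u \<in> F"
  have "\<forall>x\<in>u. x < Suc (Max (insert 0 u))" using assms u by (simp add: le_imp_less_Suc)
  then have "shift (Suc (Max (insert 0 u))) ` u = u" by (rule shift_image_below)
  then show "u \<in> shift_image F" using shift_imageI[OF u, of "Suc (Max (insert 0 u))"] by simp
qed

lemma shift_image_binom_N:
  assumes "F \<subseteq> binom_N d"
  shows "shift_image F \<subseteq> binom_N d"
proof
  fix v assume "v \<in> shift_image F"
  then obtain u k where v: "v = shift k ` u" "u \<in> F" unfolding shift_image_def by auto
  have "card v = card u" unfolding v(1) by (rule card_image) (rule inj_on_subset[OF inj_shift subset_UNIV])
  moreover have "\<forall>x\<in>u. x \<le> shift k x" unfolding shift_def by simp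
  ultimately show "v \<in> binom_N d" using assms v unfolding binom_N_def by fastforce
qed

lemma shift_image_binom_N_0:
  assumes "F \<subseteq> binom_N 0"
  shows "shift_image F = F"
proof
  have empty: "\<forall>u\<in>F. u = {}" using assms unfolding binom_N_def by auto
  then show "shift_image F \<subseteq> F" unfolding shift_image_def by auto
  show "F \<subseteq> shift_image F" using empty by (intro subset_shift_image) auto
qed

lemma shift_image_bounded:
  assumes below: "\<forall>u\<in>F. \<forall>x\<in>u. x < L" and "v \<in> shift_image F" "x \<in> v"
  shows "x \<le> L"
proof -
  obtain u k where "v = shift k ` u" "u \<in> F" using \<open>v \<in> shift_image F\<close> unfolding shift_image_def by auto
  then obtain y where "y \<in> u" "x = shift k y" using \<open>x \<in> v\<close> by auto
  moreover have "y < L" using below \<open>u \<in> F\<close> \<open>y \<in> u\<close> by blast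
  ultimately show ?thesis unfolding shift_def by simp
qed

lemma finite_shift_image_bounded:
  assumes "\<forall>u\<in>F. \<forall>x\<in>u. x < L"
  shows "finite (shift_image F)"
  by (rule finite_subset[of _ "Pow {..L}"]) (use shift_image_bounded[OF assms] in auto)

section \<open>Splitting at the largest element\<close>

definition link :: "nat \<Rightarrow> nat set set \<Rightarrow> nat set set" where
  "link L F = (\<lambda>u. u - {L}) ` {u\<in>F. L \<in> u}"

lemma link_below:
  assumes "\<forall>u\<in>F. \<forall>x\<in>u. x \<le> L"
  shows "\<forall>w\<in>link L F. \<forall>x\<in>w. x < L"
  using assms unfolding link_def by fastforce

lemma below_if_avoiding:
  fixes L :: nat
  assumes "\<forall>u\<in>F. \<forall>x\<in>u. x \<le> L"
  shows "\<forall>u\<in>{u\<in>F. L \<notin> u}. \<forall>x\<in>u. x < L"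
proof (intro ballI)
  fix u x assume "u \<in> {u\<in>F. L \<notin> u}" "x \<in> u"
  then have "x \<le> L" "x \<noteq> L" using assms by auto
  then show "x < L" by simp
qed

lemma card_link: "card (link L F) = card {u\<in>F. L \<in> u}"
  unfolding link_def by (rule card_image) (rule inj_onI, metis (mono_tags) insert_Diff mem_Collect_eq)

lemma link_binom_N: "F \<subseteq> binom_N (Suc e) \<Longrightarrow> link L F \<subseteq> binom_N e"
  unfolding link_def binom_N_def by auto

lemma card_split_by_member:
  "finite F \<Longrightarrow> card F = card {u\<in>F. L \<notin> u} + card {u\<in>F. L \<in> u}"
  by (subst card_Un_disjoint[symmetric]) (auto intro: arg_cong[where f = card])

lemma shift_image_subset_split:
  assumes bound: "\<forall>u\<in>F. \<forall>x\<in>u. x \<le> L"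
  shows "shift_image F \<subseteq>
    shift_image {u\<in>F. L \<notin> u} \<union> {u\<in>F. L \<in> u} \<union> insert (Suc L) ` shift_image (link L F)"
proof
  fix v assume "v \<in> shift_image F"
  then obtain u k where v: "v = shift k ` u" "u \<in> F" "1 \<le> k" unfolding shift_image_def by auto
  consider "L \<notin> u" | "L \<in> u" "L < k" | "L \<in> u" "k \<le> L" by (meson not_le)
  then show "v \<in> shift_image {u\<in>F. L \<notin> u} \<union> {u\<in>F. L \<in> u} \<union> insert (Suc L) ` shift_image (link L F)"
  proof cases
    case 1
    then show ?thesis using v shift_imageI[of u "{u\<in>F. L \<notin> u}"] by auto
  next
    case 2
    then have "\<forall>x\<in>u. x < k" using bound v(2) by (meson le_less_trans)
    then have "v = u" using v(1) shift_image_below by simp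
    with 2 v show ?thesis by simp
  next
    case 3
    then have "u = insert L (u - {L})" by blast
    then have "v = insert (shift k L) (shift k ` (u - {L}))" using v(1) by (metis image_insert)
    then have "v = insert (Suc L) (shift k ` (u - {L}))" using 3 by (simp add: shift_def)
    moreover have "u - {L} \<in> link L F" unfolding link_def using v 3 by auto
    ultimately show ?thesis using shift_imageI v(3) by blast
  qed
qed

lemma split_subset_shift_image:
  assumes fin: "\<forall>u\<in>F. finite u" and bound: "\<forall>u\<in>F. \<forall>x\<in>u. x \<le> L" and "1 \<le> L"
  shows "shift_image {u\<in>F. L \<notin> u} \<union> {u\<in>F. L \<in> u} \<union> insert (Suc L) ` shift_image (link L F)
    \<subseteq> shift_image F"
proof -
  have "insert (Suc L) (shift k ` w) \<in> shift_image F" if "w \<in> link L F" "1 \<le> k" for w k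
  proof -
    obtain u where u: "u \<in> F" "L \<in> u" "w = u - {L}" using \<open>w \<in> link L F\<close> unfolding link_def by auto
    have u_eq: "u = insert L w" using u by auto
    have w_below: "\<forall>x\<in>w. x < L" using link_below[OF bound] \<open>w \<in> link L F\<close> by blast
    show ?thesis
    proof (cases "k \<le> L")
      case True
      then have "insert (Suc L) (shift k ` w) = shift k ` u" unfolding u_eq by (simp add: shift_def)
      then show ?thesis using shift_imageI[OF u(1) \<open>1 \<le> k\<close>] by simp
    next
      case False
      then have "shift k ` w = w" "shift L ` w = w"
        using w_below by (auto intro!: shift_image_below)
      moreover have "shift L L = Suc L" unfolding shift_def by simp
      ultimately have "insert (Suc L) (shift k ` w) = shift L ` u" unfolding u_eq by simp
      then show ?thesis using shift_imageI[OF u(1) \<open>1 \<le> L\<close>] by simp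
    qed
  qed
  moreover have "shift_image {u\<in>F. L \<notin> u} \<subseteq> shift_image F" by (rule shift_image_mono) blast
  moreover have "{u\<in>F. L \<in> u} \<subseteq> shift_image F" using subset_shift_image[OF fin] by blast
  ultimately show ?thesis unfolding shift_image_def[of "link L F"] by blast
qed

lemma card_shift_image_split:
  assumes "finite F" "\<forall>u\<in>F. finite u" and bound: "\<forall>u\<in>F. \<forall>x\<in>u. x \<le> L" and "1 \<le> L"
  shows "card (shift_image F) =
    card (shift_image {u\<in>F. L \<notin> u} \<union> {u\<in>F. L \<in> u}) + card (shift_image (link L F))"
proof -
  let ?R = "{u\<in>F. L \<notin> u}" and ?T = "{u\<in>F. L \<in> u}"
  let ?top = "insert (Suc L) ` shift_image (link L F)"
  note R_below = below_if_avoiding[OF bound]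
  have low_le: "\<forall>v\<in>shift_image ?R \<union> ?T. \<forall>x\<in>v. x \<le> L"
    using shift_image_bounded[OF R_below] bound by blast
  have link_le: "\<forall>v\<in>shift_image (link L F). \<forall>x\<in>v. x \<le> L"
    using shift_image_bounded[OF link_below[OF bound]] by blast
  have disjoint: "(shift_image ?R \<union> ?T) \<inter> ?top = {}"
  proof (rule equals0I)
    fix z assume z: "z \<in> (shift_image ?R \<union> ?T) \<inter> ?top"
    then have "Suc L \<in> z" by blast
    moreover have "\<forall>x\<in>z. x \<le> L" using z low_le by blast
    ultimately show False using Suc_n_not_le_n by blast
  qed
  have inj: "inj_on (insert (Suc L)) (shift_image (link L F))"
  proof (rule inj_onI)
    fix X Y assume XY: "X \<in> shift_image (link L F)" "Y \<in> shift_image (link L F)"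
      "insert (Suc L) X = insert (Suc L) Y"
    have "Suc L \<notin> X" "Suc L \<notin> Y" using link_le XY(1,2) Suc_n_not_le_n by blast+
    with XY(3) show "X = Y" by (metis Diff_insert_absorb)
  qed
  have "finite (shift_image ?R \<union> ?T)"
    using finite_shift_image_bounded[OF R_below] \<open>finite F\<close> by simp
  moreover have "finite ?top"
    using finite_shift_image_bounded[OF link_below[OF bound]] by simp
  moreover have "shift_image F = (shift_image ?R \<union> ?T) \<union> ?top"
    using shift_image_subset_split[OF bound] split_subset_shift_image[OF assms(2-4)]
    by (rule subset_antisym)
  ultimately have "card (shift_image F) = card (shift_image ?R \<union> ?T) + card ?top"
    using card_Un_disjoint[OF _ _ disjoint] by simp
  also have "card ?top = card (shift_image (link L F))" by (rule card_image[OF inj])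
  finally show ?thesis .
qed

lemma card_shift_image_low_le:
  assumes FB: "F \<subseteq> binom_N d" and bound: "\<forall>u\<in>F. \<forall>x\<in>u. x \<le> L"
  shows "card (shift_image {u\<in>F. L \<notin> u} \<union> {u\<in>F. L \<in> u}) \<le> L choose d"
proof -
  have "shift_image {u\<in>F. L \<notin> u} \<union> {u\<in>F. L \<in> u} \<subseteq> {u. u \<subseteq> {1..L} \<and> card u = d}"
  proof
    fix v assume v: "v \<in> shift_image {u\<in>F. L \<notin> u} \<union> {u\<in>F. L \<in> u}"
    have "\<forall>x\<in>v. x \<le> L" using v shift_image_bounded[OF below_if_avoiding[OF bound]] bound by blast
    moreover have "v \<in> binom_N d" using v shift_image_binom_N[of "{u\<in>F. L \<notin> u}"] FB by blast
    ultimately show "v \<in> {u. u \<subseteq> {1..L} \<and> card u = d}" unfolding binom_N_def by auto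
  qed
  then show ?thesis
    using card_mono[of "{u. u \<subseteq> {1..L} \<and> card u = d}"] n_subsets[of "{1..L}" d] by simp
qed

lemma card_link_le:
  assumes FB: "F \<subseteq> binom_N (Suc e)" and bound: "\<forall>u\<in>F. \<forall>x\<in>u. x \<le> L"
  shows "card (link L F) \<le> (L - 1) choose e"
proof -
  have "link L F \<subseteq> {u. u \<subseteq> {1..<L} \<and> card u = e}"
  proof
    fix w assume "w \<in> link L F"
    then have "w \<in> binom_N e" "\<forall>x\<in>w. x < L" using link_binom_N[OF FB] link_below[OF bound] by auto
    then show "w \<in> {u. u \<subseteq> {1..<L} \<and> card u = e}" unfolding binom_N_def by auto
  qed
  then show ?thesis
    using card_mono[of "{u. u \<subseteq> {1..<L} \<and> card u = e}"] n_subsets[of "{1..<L}" e] by simp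
qed

lemma Max_Union_binom_N:
  assumes "F \<subseteq> binom_N (Suc e)" "finite F" "F \<noteq> {}"
  shows "\<forall>u\<in>F. \<forall>x\<in>u. x \<le> Max (\<Union>F)" "1 \<le> Max (\<Union>F)" "\<exists>v\<in>F. Max (\<Union>F) \<in> v"
proof -
  have fin: "finite (\<Union>F)" using assms(1,2) unfolding binom_N_def by auto
  show "\<forall>u\<in>F. \<forall>x\<in>u. x \<le> Max (\<Union>F)" using fin by (meson Max_ge UnionI)
  obtain u where "u \<in> F" using assms(3) by auto
  then have "u \<noteq> {}" using assms(1) unfolding binom_N_def by auto
  with \<open>u \<in> F\<close> have "Max (\<Union>F) \<in> \<Union>F" using Max_in[OF fin] by blast
  then show "\<exists>v\<in>F. Max (\<Union>F) \<in> v" by blast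
  then show "1 \<le> Max (\<Union>F)" using assms(1) unfolding binom_N_def by auto
qed

lemma split_at_Max:
  assumes FB: "F \<subseteq> binom_N (Suc e)" and "finite F" "F \<noteq> {}"
  defines "L \<equiv> Max (\<Union>F)"
  shows "card (shift_image F)
      = card (shift_image {u\<in>F. L \<notin> u} \<union> {u\<in>F. L \<in> u}) + card (shift_image (link L F))"
    and "card F = card {u\<in>F. L \<notin> u} + card (link L F)"
    and "1 \<le> card (link L F)"
proof -
  note L = Max_Union_binom_N[OF FB \<open>finite F\<close> \<open>F \<noteq> {}\<close>, folded L_def]
  have "\<forall>u\<in>F. finite u" using FB unfolding binom_N_def by auto
  then show "card (shift_image F)
      = card (shift_image {u\<in>F. L \<notin> u} \<union> {u\<in>F. L \<in> u}) + card (shift_image (link L F))"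
    by (rule card_shift_image_split[OF \<open>finite F\<close> _ L(1,2)])
  show "card F = card {u\<in>F. L \<notin> u} + card (link L F)"
    using card_split_by_member[OF \<open>finite F\<close>] card_link by simp
  show "1 \<le> card (link L F)"
    using L(3) \<open>finite F\<close> card_link[of L F] by (auto simp: Suc_le_eq card_gt_0_iff)
qed

section \<open>The counting function\<close>

text \<open>\<open>inc_count d m\<close> is the size of the Inc-image of the compressed family of \<open>m\<close> sets.
  Writing \<open>m = (n choose d) + r\<close> with \<open>1 \<le> r \<le> n choose (d - 1)\<close>, that family consists of
  all \<open>d\<close>-subsets of \<open>{1..n}\<close> and of \<open>r\<close> sets with maximum \<open>n + 1\<close>. Its Inc-image consists
  of all \<open>d\<close>-subsets of \<open>{1..n + 1}\<close> and of the Inc-image of the link (a compressed family of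
  \<open>r\<close> sets of size \<open>d - 1\<close>), each enlarged by \<open>n + 2\<close>.\<close>

fun inc_count :: "nat \<Rightarrow> nat \<Rightarrow> nat" where
  "inc_count 0 m = m"
| "inc_count (Suc e) m = (if m = 0 then 0 else
     (let n = LEAST n. m \<le> Suc n choose Suc e
      in (Suc n choose Suc e) + inc_count e (m - (n choose Suc e))))"

lemma inc_count_0 [simp]: "inc_count e 0 = 0"
  by (cases e) auto

lemma inc_count_block:
  assumes "1 \<le> r" "r \<le> n choose e"
  shows "inc_count (Suc e) ((n choose Suc e) + r) = (Suc n choose Suc e) + inc_count e r"
proof -
  let ?m = "(n choose Suc e) + r"
  have "(LEAST n'. ?m \<le> Suc n' choose Suc e) = n"
  proof (rule Least_equality)
    show "?m \<le> Suc n choose Suc e" using assms by simp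
  next
    fix y assume y: "?m \<le> Suc y choose Suc e"
    show "n \<le> y"
    proof (rule ccontr)
      assume "\<not> n \<le> y"
      then have "Suc y choose Suc e \<le> n choose Suc e" by (intro binomial_right_mono) simp
      with y assms show False by simp
    qed
  qed
  then show ?thesis using assms by (simp add: Let_def)
qed

declare inc_count.simps(2) [simp del]

lemma inc_count_binomial: "e \<le> n \<Longrightarrow> inc_count e (n choose e) = Suc n choose e"
proof (induction e arbitrary: n)
  case 0
  then show ?case by simp
next
  case (Suc e)
  then obtain n' where n: "n = Suc n'" and "e \<le> n'" by (cases n) auto
  then have "1 \<le> n' choose e" by (simp add: Suc_le_eq)
  have "inc_count (Suc e) (n choose Suc e) = inc_count (Suc e) ((n' choose Suc e) + (n' choose e))"
    using n by (simp add: add.commute)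
  also have "\<dots> = (Suc n' choose Suc e) + (Suc n' choose e)"
    using inc_count_block[OF \<open>1 \<le> n' choose e\<close> order_refl] Suc.IH[OF \<open>e \<le> n'\<close>] by simp
  also have "\<dots> = Suc n choose Suc e" using n by simp
  finally show ?case .
qed

lemma inc_count_block':
  assumes "Suc e \<le> n" "r \<le> n choose e"
  shows "inc_count (Suc e) ((n choose Suc e) + r) = (Suc n choose Suc e) + inc_count e r"
proof (cases "r = 0")
  case True
  then show ?thesis using inc_count_binomial[OF assms(1)] by simp
next
  case False
  then show ?thesis using inc_count_block[of r n e] assms by simp
qed

lemma inc_count_Suc_binomial:
  "Suc e \<le> k \<Longrightarrow> inc_count (Suc e) (Suc k choose Suc e) = (Suc k choose Suc e) + inc_count e (k choose e)"
  using inc_count_block'[of e k "k choose e"] by (simp add: add.commute)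

lemma inc_count_one: "1 \<le> M \<Longrightarrow> inc_count 1 M = M + 1"
  using inc_count_block[of 1 "M - 1" 0] by simp

lemma inc_count_Suc_one: "inc_count (Suc e) 1 = 1 + inc_count e 1"
  using inc_count_block[of 1 e e] by (simp add: binomial_eq_0)

lemma binomial_middle_le:
  assumes "w \<le> k choose j" "w \<le> k choose Suc (Suc j)"
  shows "w \<le> k choose Suc j"
proof (cases "2 * Suc j \<le> k")
  case True
  then have "k choose j \<le> k choose Suc j" by (intro binomial_mono) auto
  with assms show ?thesis by simp
next
  case False
  show ?thesis
  proof (cases "Suc (Suc j) \<le> k")
    case True
    with False have "k choose Suc (Suc j) \<le> k choose Suc j" by (intro binomial_antimono) auto
    with assms show ?thesis by simp
  next
    case False
    then have "k choose Suc (Suc j) = 0" by simp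
    with assms show ?thesis by simp
  qed
qed

lemma cascade_decomp:
  assumes "1 \<le> m"
  obtains n r where "m = (n choose Suc e) + r" "1 \<le> r" "r \<le> n choose e"
proof -
  have ex: "\<exists>n. m \<le> Suc n choose Suc e"
  proof
    have "Suc (m + e) choose Suc e = Suc (m + e) choose m"
      using binomial_symmetric[of "Suc e" "Suc (m + e)"] by simp
    also have "\<dots> \<ge> Suc m choose m" by (rule binomial_right_mono) simp
    finally show "m \<le> Suc (m + e) choose Suc e"
      using binomial_symmetric[of m "Suc m"] by simp
  qed
  define n where "n = (LEAST n. m \<le> Suc n choose Suc e)"
  have above: "m \<le> Suc n choose Suc e" unfolding n_def by (rule LeastI_ex[OF ex])
  have below: "n choose Suc e < m"
  proof (cases n)
    case 0
    then show ?thesis using assms by simp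
  next
    case (Suc n')
    have "\<not> m \<le> Suc n' choose Suc e"
    proof
      assume "m \<le> Suc n' choose Suc e"
      then have "n \<le> n'" unfolding n_def by (rule Least_le)
      with Suc show False by simp
    qed
    with Suc show ?thesis by simp
  qed
  show ?thesis
    by (rule that[of n "m - (n choose Suc e)"]) (use above below in auto)
qed

lemma inc_count_Suc_mono: "inc_count e m \<le> inc_count e (Suc m)"
proof (induction e arbitrary: m)
  case 0
  then show ?case by simp
next
  case (Suc e)
  show ?case
  proof (cases "m = 0")
    case False
    then obtain n r where m: "m = (n choose Suc e) + r" and r: "1 \<le> r" "r \<le> n choose e"
      using cascade_decomp[of m e] by auto
    have value_m: "inc_count (Suc e) m = (Suc n choose Suc e) + inc_count e r"
      using inc_count_block[OF r] m by simp
    show ?thesis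
    proof (cases "r < n choose e")
      case True
      then have "inc_count (Suc e) (Suc m) = (Suc n choose Suc e) + inc_count e (Suc r)"
        using inc_count_block[of "Suc r" n e] m by simp
      then show ?thesis using value_m Suc.IH[of r] by simp
    next
      case False
      then have r_eq: "r = n choose e" using r(2) by simp
      then have "e \<le> n" using r(1) by (metis binomial_eq_0_iff not_one_le_zero not_le)
      have "Suc m = (Suc n choose Suc e) + 1" using m r_eq by simp
      then have "inc_count (Suc e) (Suc m) = (Suc (Suc n) choose Suc e) + inc_count e 1"
        using inc_count_block[of 1 "Suc n" e] \<open>e \<le> n\<close> by (simp add: Suc_le_eq)
      moreover have "inc_count e r = Suc n choose e" using inc_count_binomial[OF \<open>e \<le> n\<close>] r_eq by simp
      ultimately show ?thesis using value_m by simp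
    qed
  qed simp
qed

lemma inc_count_mono: "a \<le> b \<Longrightarrow> inc_count e a \<le> inc_count e b"
  using lift_Suc_mono_le[of "inc_count e"] inc_count_Suc_mono by blast
text \<open>The following inequalities between values of \<open>inc_count\<close> near binomial coefficients
  are proved simultaneously, by induction on the level \<open>e\<close> and, within a level, on \<open>k\<close>.\<close>

definition subadditive_at :: "nat \<Rightarrow> bool" where
  "subadditive_at e \<longleftrightarrow> (\<forall>a b. inc_count e (a + b) \<le> inc_count e a + inc_count e b)"

definition exchange_full :: "nat \<Rightarrow> nat \<Rightarrow> bool" where
  "exchange_full e k \<longleftrightarrow> (\<forall>r d. r + d \<le> k choose e \<longrightarrow>
     inc_count e (k choose e) + inc_count e r \<le> inc_count e ((k choose e) - d) + inc_count e (r + d))"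

definition exchange_row :: "nat \<Rightarrow> nat \<Rightarrow> bool" where
  "exchange_row e k \<longleftrightarrow> (\<forall>v. v \<le> k choose e \<longrightarrow>
     inc_count e (Suc k choose e) + inc_count e ((k choose e) - v)
     \<le> inc_count e (k choose e) + inc_count e ((Suc k choose e) - v))"

definition exchange_level :: "nat \<Rightarrow> nat \<Rightarrow> bool" where
  "exchange_level e k \<longleftrightarrow> (\<forall>v. v \<le> k choose e \<longrightarrow> v \<le> k choose Suc e \<longrightarrow>
     inc_count e (k choose e) + inc_count (Suc e) ((k choose Suc e) - v)
     \<le> inc_count (Suc e) (k choose Suc e) + inc_count e ((k choose e) - v))"

lemma inequalities_level_0: "subadditive_at 0" "exchange_full 0 k" "exchange_row 0 k"
  unfolding subadditive_at_def exchange_full_def exchange_row_def by auto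

lemma exchange_row_Suc:
  assumes level: "exchange_level e k" and full: "exchange_full (Suc e) k"
  shows "exchange_row (Suc e) k"
  unfolding exchange_row_def
proof (intro allI impI)
  fix v assume v: "v \<le> k choose Suc e"
  let ?g = "inc_count (Suc e)" and ?h = "inc_count e"
  let ?B = "k choose Suc e" and ?L = "k choose e" and ?A = "Suc k choose Suc e"
  have A: "?A = ?L + ?B" by simp
  show "?g ?A + ?g (?B - v) \<le> ?g ?B + ?g (?A - v)"
  proof (cases "Suc e \<le> k")
    case False
    then have "?B = 0" by simp
    with v show ?thesis by simp
  next
    case ek: True
    have g_B: "?g ?B = ?A" and g_A: "?g ?A = ?A + ?h ?L"
      using inc_count_binomial[OF ek] inc_count_Suc_binomial[OF ek] by simp_all
    show ?thesis
    proof (cases "v \<le> ?L")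
      case True
      have "?A - v = ?B + (?L - v)" using True A by simp
      then have "?g (?A - v) = ?A + ?h (?L - v)" using inc_count_block'[OF ek, of "?L - v"] by simp
      moreover have "?h ?L + ?g (?B - v) \<le> ?g ?B + ?h (?L - v)"
        using level True v unfolding exchange_level_def by blast
      ultimately show ?thesis using g_A g_B by linarith
    next
      case False
      have "(?B - v) + ?L \<le> ?B" using False v by simp
      then have "?g ?B + ?g (?B - v) \<le> ?g (?B - ?L) + ?g (?B - v + ?L)"
        using full unfolding exchange_full_def by blast
      moreover have "?h ?L + ?g (?B - ?L) \<le> ?g ?B + ?h (?L - ?L)"
        using level False v unfolding exchange_level_def by auto
      moreover have "?B - v + ?L = ?A - v" using False v A by simp
      ultimately show ?thesis using g_A g_B by simp
    qed
  qed
qed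

lemma exchange_level_Suc_small:
  assumes sub: "subadditive_at e" and "k \<le> e"
  shows "exchange_level e (Suc k)"
  unfolding exchange_level_def
proof (intro allI impI)
  fix v assume v: "v \<le> Suc k choose e" "v \<le> Suc k choose Suc e"
  let ?g = "inc_count (Suc e)" and ?h = "inc_count e"
  show "?h (Suc k choose e) + ?g ((Suc k choose Suc e) - v)
    \<le> ?g (Suc k choose Suc e) + ?h ((Suc k choose e) - v)"
  proof (cases "k = e \<and> v = 1")
    case True
    then have "?h (Suc k choose e) + ?g ((Suc k choose Suc e) - v) = ?h (e + 1)"
      and "?g (Suc k choose Suc e) + ?h ((Suc k choose e) - v) = 1 + ?h 1 + ?h e"
      using inc_count_Suc_one[of e] by simp_all
    moreover have "?h (e + 1) \<le> ?h e + ?h 1" using sub unfolding subadditive_at_def by blast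
    ultimately show ?thesis by linarith
  next
    case False
    then have "v = 0" using v(2) \<open>k \<le> e\<close> by (cases "k = e") (simp_all add: binomial_eq_0)
    then show ?thesis by simp
  qed
qed

lemma exchange_level_Suc:
  assumes sub: "subadditive_at e" and row: "exchange_row e k" and level: "exchange_level e k"
  shows "exchange_level e (Suc k)"
proof (cases "Suc e \<le> k")
  case False
  then show ?thesis using exchange_level_Suc_small[OF sub] by simp
next
  case ek: True
  show ?thesis
    unfolding exchange_level_def
  proof (intro allI impI)
    fix v assume v1: "v \<le> Suc k choose e" and v2: "v \<le> Suc k choose Suc e"
    let ?g = "inc_count (Suc e)" and ?h = "inc_count e"
    let ?B = "k choose Suc e" and ?L = "k choose e"
    let ?A = "Suc k choose Suc e" and ?X = "Suc k choose e"
    have A: "?A = ?L + ?B" by simp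
    have g_B: "?g ?B = ?A" and g_A: "?g ?A = ?A + ?h ?L"
      using inc_count_binomial[OF ek] inc_count_Suc_binomial[OF ek] by simp_all
    show "?h ?X + ?g (?A - v) \<le> ?g ?A + ?h (?X - v)"
    proof (cases "v \<le> ?L")
      case True
      have "?A - v = ?B + (?L - v)" using True A by simp
      then have "?g (?A - v) = ?A + ?h (?L - v)" using inc_count_block'[OF ek, of "?L - v"] by simp
      moreover have "?h ?X + ?h (?L - v) \<le> ?h ?L + ?h (?X - v)"
        using row True unfolding exchange_row_def by blast
      ultimately show ?thesis using g_A by linarith
    next
      case False
      then obtain e' where e: "e = Suc e'" using v1 by (cases e) auto
      define w where "w = v - ?L"
      have X: "?X = (k choose e') + ?L" using e by simp
      have w_B: "w \<le> ?B" using v2 A unfolding w_def by simp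
      have w_L: "w \<le> ?L"
        using binomial_middle_le[of w k e'] v1 w_B X e unfolding w_def by simp
      have "?X - w = (?X - v) + ?L" using False v1 unfolding w_def by simp
      then have "?h (?X - w) \<le> ?h (?X - v) + ?h ?L" using sub unfolding subadditive_at_def by simp
      moreover have "?h ?X + ?h (?L - w) \<le> ?h ?L + ?h (?X - w)"
        using row w_L unfolding exchange_row_def by blast
      moreover have "?h ?L + ?g (?B - w) \<le> ?g ?B + ?h (?L - w)"
        using level w_L w_B unfolding exchange_level_def by blast
      moreover have "?A - v = ?B - w" using False A v2 unfolding w_def by simp
      ultimately show ?thesis using g_A g_B by simp
    qed
  qed
qed
lemma exchange_full_Suc_small:
  assumes "k \<le> e"
  shows "exchange_full (Suc e) (Suc k)"
  unfolding exchange_full_def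
proof (intro allI impI)
  fix r d assume rd: "r + d \<le> Suc k choose Suc e"
  let ?g = "inc_count (Suc e)" and ?A = "Suc k choose Suc e"
  have "?A \<le> 1" using assms by (cases "k = e") (simp_all add: binomial_eq_0)
  with rd consider "d = 0" | "d = 1" "r = 0" "?A = 1" by linarith
  then show "?g ?A + ?g r \<le> ?g (?A - d) + ?g (r + d)" by cases simp_all
qed

lemma exchange_full_Suc_straddle:
  assumes sub: "subadditive_at e" and full: "exchange_full (Suc e) k" and level: "exchange_level e k"
    and ek: "Suc e \<le> k"
    and rd: "r < k choose Suc e" "k choose Suc e < r + d" "r + d \<le> Suc k choose Suc e"
  shows "inc_count (Suc e) (Suc k choose Suc e) + inc_count (Suc e) r
    \<le> inc_count (Suc e) ((Suc k choose Suc e) - d) + inc_count (Suc e) (r + d)"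
proof -
  let ?g = "inc_count (Suc e)" and ?h = "inc_count e"
  let ?B = "k choose Suc e" and ?L = "k choose e" and ?A = "Suc k choose Suc e"
  have A: "?A = ?L + ?B" by simp
  have g_B: "?g ?B = ?A" and g_A: "?g ?A = ?A + ?h ?L"
    using inc_count_binomial[OF ek] inc_count_Suc_binomial[OF ek] by simp_all
  define v where "v = ?B - r"
  define u where "u = r + d - ?B"
  have d: "d = v + u" and r: "r = ?B - v" and v_B: "v \<le> ?B" and u_L: "u \<le> ?L"
    using rd A unfolding u_def v_def by simp_all
  have g_rd: "?g (r + d) = ?A + ?h u"
    using inc_count_block'[OF ek u_L] rd(2) unfolding u_def by simp
  show ?thesis
  proof (cases "d \<le> ?L")
    case True
    have "?A - d = ?B + (?L - d)" using True A by simp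
    then have "?g (?A - d) = ?A + ?h (?L - d)" using inc_count_block'[OF ek, of "?L - d"] by simp
    moreover have "v \<le> ?L" "v \<le> ?B" using True d unfolding v_def by simp_all
    then have "?h ?L + ?g (?B - v) \<le> ?g ?B + ?h (?L - v)"
      using level unfolding exchange_level_def by blast
    moreover have "?L - v = (?L - d) + u" using True d by simp
    then have "?h (?L - v) \<le> ?h (?L - d) + ?h u" using sub unfolding subadditive_at_def by simp
    moreover have "?g (?B - v) = ?g r" using r by simp
    ultimately show ?thesis using g_rd g_A g_B by linarith
  next
    case False
    have c: "r + (?L - u) \<le> ?B" using d u_L False r v_B by arith
    have r_Lu: "r + (?L - u) = ?A - d" using d u_L False r v_B A by arith
    have "?g ?B + ?g r \<le> ?g (?B - (?L - u)) + ?g (r + (?L - u))"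
      using full c unfolding exchange_full_def by blast
    moreover have "?h ?L + ?g (?B - (?L - u)) \<le> ?g ?B + ?h (?L - (?L - u))"
      using level c unfolding exchange_level_def by simp
    moreover have "?L - (?L - u) = u" using u_L by simp
    ultimately show ?thesis using r_Lu g_rd g_A g_B by simp
  qed
qed

lemma exchange_full_Suc:
  assumes sub: "subadditive_at e" and full_e: "exchange_full e k"
    and full: "exchange_full (Suc e) k" and row: "exchange_row (Suc e) k" and level: "exchange_level e k"
  shows "exchange_full (Suc e) (Suc k)"
proof (cases "Suc e \<le> k")
  case False
  then show ?thesis using exchange_full_Suc_small by simp
next
  case ek: True
  show ?thesis
    unfolding exchange_full_def
  proof (intro allI impI)
    fix r d assume rd: "r + d \<le> Suc k choose Suc e"
    let ?g = "inc_count (Suc e)" and ?h = "inc_count e"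
    let ?B = "k choose Suc e" and ?L = "k choose e" and ?A = "Suc k choose Suc e"
    have A: "?A = ?L + ?B" by simp
    consider "r + d \<le> ?B" | "?B \<le> r" | "r < ?B" "?B < r + d" by linarith
    then show "?g ?A + ?g r \<le> ?g (?A - d) + ?g (r + d)"
    proof cases
      case 1
      then have "?g ?B + ?g r \<le> ?g (?B - d) + ?g (r + d)"
        and "?g ?A + ?g (?B - d) \<le> ?g ?B + ?g (?A - d)"
        using full row unfolding exchange_full_def exchange_row_def by simp_all
      then show ?thesis by linarith
    next
      case 2
      define t where "t = r - ?B"
      have r: "r = ?B + t" and td: "t + d \<le> ?L" using 2 rd A unfolding t_def by simp_all
      have "?A - d = ?B + (?L - d)" using td A by simp
      then have "?g (?A - d) = ?A + ?h (?L - d)" using inc_count_block'[OF ek, of "?L - d"] td by simp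
      moreover have "?g r = ?A + ?h t" "?g (r + d) = ?A + ?h (t + d)"
        using inc_count_block'[OF ek, of t] inc_count_block'[OF ek, of "t + d"] td r
        by (simp_all add: add.assoc)
      moreover have "?g ?A = ?A + ?h ?L" by (rule inc_count_Suc_binomial[OF ek])
      moreover have "?h ?L + ?h t \<le> ?h (?L - d) + ?h (t + d)"
        using full_e td unfolding exchange_full_def by blast
      ultimately show ?thesis by linarith
    next
      case 3
      then show ?thesis using exchange_full_Suc_straddle[OF sub full level ek] rd by blast
    qed
  qed
qed

lemma exchange_level_and_full_Suc:
  assumes sub: "subadditive_at e" and row: "\<forall>k. exchange_row e k" and full: "\<forall>k. exchange_full e k"
  shows "exchange_level e k \<and> exchange_full (Suc e) k"
proof (induction k)
  case 0
  show ?case unfolding exchange_level_def exchange_full_def by auto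
next
  case (Suc k)
  then have level: "exchange_level e k" and full': "exchange_full (Suc e) k" by auto
  have "exchange_row (Suc e) k" by (rule exchange_row_Suc[OF level full'])
  then show ?case
    using exchange_level_Suc[OF sub row[rule_format] level]
      exchange_full_Suc[OF sub full[rule_format] full' _ level] by simp
qed

lemma inc_count_choose_Suc_le:
  assumes sub: "subadditive_at e"
  shows "inc_count e (N choose Suc e) \<le> Suc N choose Suc e"
proof (induction N)
  case 0
  then show ?case by simp
next
  case (Suc N)
  have "inc_count e (Suc N choose Suc e) \<le> inc_count e (N choose e) + inc_count e (N choose Suc e)"
    using sub unfolding subadditive_at_def by simp
  moreover have "inc_count e (N choose e) \<le> Suc N choose e"
    by (cases "e \<le> N") (simp_all add: inc_count_binomial binomial_eq_0)
  ultimately show ?case using Suc.IH by simp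
qed

lemma inc_count_le_inc_count_Suc:
  assumes sub: "subadditive_at e"
  shows "inc_count e m \<le> inc_count (Suc e) m"
proof (cases "m = 0")
  case False
  then obtain n r where m: "m = (n choose Suc e) + r" and r: "1 \<le> r" "r \<le> n choose e"
    using cascade_decomp[of m e] by auto
  have "inc_count e m \<le> inc_count e (n choose Suc e) + inc_count e r"
    using sub m unfolding subadditive_at_def by simp
  also have "\<dots> \<le> (Suc n choose Suc e) + inc_count e r"
    using inc_count_choose_Suc_le[OF sub, of n] by simp
  also have "\<dots> = inc_count (Suc e) m" using inc_count_block[OF r] m by simp
  finally show ?thesis .
qed simp

lemma subadditive_at_Suc:
  assumes sub: "subadditive_at e" and full: "\<forall>k. exchange_full (Suc e) k"
  shows "subadditive_at (Suc e)"
  unfolding subadditive_at_def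
proof (intro allI)
  fix a b
  let ?g = "inc_count (Suc e)" and ?h = "inc_count e"
  show "?g (a + b) \<le> ?g a + ?g b"
  proof (cases "a = 0 \<or> b = 0")
    case False
    then obtain n r where m: "a + b = (n choose Suc e) + r" and r: "1 \<le> r" "r \<le> n choose e"
      using cascade_decomp[of "a + b" e] by auto
    have g_ab: "?g (a + b) = (Suc n choose Suc e) + ?h r" using inc_count_block[OF r] m by simp
    have g_ge_h: "?h y \<le> ?g y" for y by (rule inc_count_le_inc_count_Suc[OF sub])
    have one_large: "?g (a + b) \<le> ?g x + ?g y"
      if xy: "x + y = a + b" and x: "x > n choose Suc e" for x y
    proof -
      define s where "s = x - (n choose Suc e)"
      have x': "x = (n choose Suc e) + s" "1 \<le> s" "s \<le> n choose e" "s + y = r"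
        using x xy m r unfolding s_def by auto
      have "?g x = (Suc n choose Suc e) + ?h s" using inc_count_block[OF x'(2,3)] x'(1) by simp
      moreover have "?h r \<le> ?h s + ?h y" using sub x'(4) unfolding subadditive_at_def by metis
      ultimately show ?thesis using g_ab g_ge_h[of y] by simp
    qed
    consider "a > n choose Suc e" | "b > n choose Suc e" | "a \<le> n choose Suc e" "b \<le> n choose Suc e"
      by linarith
    then show ?thesis
    proof cases
      case 1
      then show ?thesis using one_large[of a b] by simp
    next
      case 2
      then show ?thesis using one_large[of b a] by (simp add: add.commute)
    next
      case 3
      then have en: "Suc e \<le> n" using False by (metis binomial_eq_0_iff le_zero_eq not_le)
      have "r + ((n choose Suc e) - a) = b" using m 3 by simp
      then have "?g (n choose Suc e) + ?g r \<le> ?g ((n choose Suc e) - ((n choose Suc e) - a)) + ?g b"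
        using full 3 unfolding exchange_full_def by (metis order_refl)
      moreover have "(n choose Suc e) - ((n choose Suc e) - a) = a" using 3 by simp
      moreover have "?g (n choose Suc e) = Suc n choose Suc e" by (rule inc_count_binomial[OF en])
      ultimately show ?thesis using g_ab g_ge_h[of r] by simp
    qed
  qed auto
qed

lemma inc_count_inequalities:
  "subadditive_at e \<and> (\<forall>k. exchange_full e k) \<and> (\<forall>k. exchange_row e k)"
proof (induction e)
  case 0
  then show ?case using inequalities_level_0 by simp
next
  case (Suc e)
  then have sub: "subadditive_at e" and row: "\<forall>k. exchange_row e k" and full: "\<forall>k. exchange_full e k"
    by auto
  have level': "\<forall>k. exchange_level e k" and full': "\<forall>k. exchange_full (Suc e) k"
    using exchange_level_and_full_Suc[OF sub row full] by auto
  then have "\<forall>k. exchange_row (Suc e) k" using exchange_row_Suc by blast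
  then show ?case using subadditive_at_Suc[OF sub full'] full' by simp
qed

lemma inc_count_subadditive: "inc_count e (a + b) \<le> inc_count e a + inc_count e b"
  using inc_count_inequalities[of e] unfolding subadditive_at_def by blast

lemma inc_count_exchange_full:
  "r + d \<le> k choose e \<Longrightarrow>
    inc_count e (k choose e) + inc_count e r \<le> inc_count e ((k choose e) - d) + inc_count e (r + d)"
  using inc_count_inequalities[of e] unfolding exchange_full_def by blast
lemma inc_count_block_lower:
  assumes "Suc e \<le> k"
  shows "(Suc k choose Suc e) + inc_count e d \<le> inc_count (Suc e) ((k choose Suc e) + d)"
  using assms
proof (induction d arbitrary: k rule: less_induct)
  case (less d)
  show ?case
  proof (cases "d \<le> k choose e")
    case True
    then show ?thesis using inc_count_block'[OF less.prems True] by simp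
  next
    case False
    define d' where "d' = d - (k choose e)"
    have "e \<le> k" using less.prems by simp
    then have d: "d = (k choose e) + d'" and "d' < d"
      using False unfolding d'_def by (simp_all add: Suc_le_eq)
    have "(Suc (Suc k) choose Suc e) + inc_count e d' \<le> inc_count (Suc e) ((Suc k choose Suc e) + d')"
      using less.IH[OF \<open>d' < d\<close>, of "Suc k"] less.prems by simp
    moreover have "inc_count (Suc e) ((Suc k choose Suc e) + d') = inc_count (Suc e) ((k choose Suc e) + d)"
      using d by (simp add: add_ac)
    moreover have "inc_count e d \<le> (Suc k choose e) + inc_count e d'"
      using inc_count_subadditive[of e "k choose e" d'] inc_count_binomial[OF \<open>e \<le> k\<close>] d by simp
    moreover have "Suc (Suc k) choose Suc e = (Suc k choose e) + (Suc k choose Suc e)" by simp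
    ultimately show ?thesis by linarith
  qed
qed

lemma inc_count_le_Suc_binomial: "m \<le> n choose e \<Longrightarrow> inc_count e m \<le> Suc n choose e"
proof (cases "e \<le> n")
  case True
  assume "m \<le> n choose e"
  then have "inc_count e m \<le> inc_count e (n choose e)" by (rule inc_count_mono)
  with True show ?thesis using inc_count_binomial by simp
qed (simp add: binomial_eq_0)

lemma inc_count_split_le_large:
  assumes IH: "\<And>M x. 1 \<le> x \<Longrightarrow> x \<le> M \<Longrightarrow>
      inc_count (Suc e) M \<le> inc_count e x + max (inc_count (Suc e) (M - x)) M"
    and M: "M = (n choose Suc (Suc e)) + r" and r: "1 \<le> r" "r \<le> n choose Suc e"
    and x: "r < x" "x \<le> M"
  shows "inc_count (Suc (Suc e)) M \<le> inc_count (Suc e) x + max (inc_count (Suc (Suc e)) (M - x)) M"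
proof -
  let ?F = "inc_count (Suc (Suc e))" and ?G = "inc_count (Suc e)" and ?H = "inc_count e"
  define y where "y = M - x"
  have "y < n choose Suc (Suc e)" using x M unfolding y_def by simp
  then have "Suc (Suc e) \<le> n" by (metis binomial_eq_0_iff not_less0 not_le)
  then obtain n' where n: "n = Suc n'" and "Suc e \<le> n'" by (cases n) auto
  have pascal: "n choose Suc (Suc e) = (n' choose Suc e) + (n' choose Suc (Suc e))" using n by simp
  have F_M: "?F M = (n choose Suc e) + (n choose Suc (Suc e)) + ?G r"
    using inc_count_block[OF r] M by simp
  have G_x: "(n choose Suc e) + ?H (x - (n' choose Suc e)) \<le> ?G x" if "n' choose Suc e \<le> x"
    using inc_count_block_lower[OF \<open>Suc e \<le> n'\<close>, of "x - (n' choose Suc e)"] that n by simp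
  show ?thesis
  proof (cases "y \<le> n' choose Suc (Suc e)")
    case True
    have x_ge: "(n' choose Suc e) + r \<le> x" using True M pascal x unfolding y_def by simp
    have "?F y \<le> M" using inc_count_le_Suc_binomial[OF True] n M by simp
    then have max: "max (?F (M - x)) M = M" unfolding y_def by simp
    have "?H r \<le> ?H (x - (n' choose Suc e))" using x_ge by (intro inc_count_mono) simp
    moreover have "?G r \<le> ?H r + r" using IH[of r r] r by simp
    moreover have "(n choose Suc e) + ?H (x - (n' choose Suc e)) \<le> ?G x" using G_x x_ge by simp
    ultimately show ?thesis using F_M max M by linarith
  next
    case False
    define s where "s = y - (n' choose Suc (Suc e))"
    have s: "1 \<le> s" "s \<le> n' choose Suc e" "y = (n' choose Suc (Suc e)) + s"
      using False \<open>y < n choose Suc (Suc e)\<close> pascal unfolding s_def by auto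
    have F_y: "?F y = (n choose Suc (Suc e)) + ?G s" using inc_count_block[OF s(1,2)] s(3) n by simp
    have x_s: "x + s = (n' choose Suc e) + r" using s(3) pascal M x unfolding y_def by simp
    show ?thesis
    proof (cases "r \<le> s")
      case True
      then have "r + (s - r) \<le> n' choose Suc e" using s by simp
      then have "?G (n' choose Suc e) + ?G r \<le> ?G ((n' choose Suc e) - (s - r)) + ?G (r + (s - r))"
        by (rule inc_count_exchange_full)
      moreover have "(n' choose Suc e) - (s - r) = x" using x_s True by simp
      moreover have "?G (n' choose Suc e) = n choose Suc e" using inc_count_binomial[OF \<open>Suc e \<le> n'\<close>] n by simp
      ultimately show ?thesis using F_M F_y True unfolding y_def by simp
    next
      case False
      then have "?G r \<le> ?H (r - s) + max (?G s) r" using IH[of "r - s" r] by simp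
      moreover have "n' choose Suc e \<le> x" "x - (n' choose Suc e) = r - s" using x_s False by simp_all
      then have "(n choose Suc e) + ?H (r - s) \<le> ?G x" using G_x by simp
      ultimately show ?thesis
        using F_M F_y M unfolding y_def by (simp add: max_def split: if_splits)
    qed
  qed
qed

text \<open>This is the numerical heart of the lower bound: splitting a family of size \<open>M\<close> into
  \<open>x\<close> sets through its maximum and \<open>M - x\<close> sets avoiding it cannot beat the compressed family.\<close>

lemma inc_count_split_le:
  assumes "1 \<le> x" "x \<le> M"
  shows "inc_count (Suc e) M \<le> inc_count e x + max (inc_count (Suc e) (M - x)) M"
  using assms
proof (induction e arbitrary: M x)
  case 0
  then show ?case using inc_count_one[of M] by simp
next
  case (Suc e)
  let ?F = "inc_count (Suc (Suc e))" and ?G = "inc_count (Suc e)"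
  obtain n r where M: "M = (n choose Suc (Suc e)) + r" and r: "1 \<le> r" "r \<le> n choose Suc e"
    using cascade_decomp[of M "Suc e"] Suc.prems by auto
  have F_M: "?F M = (Suc n choose Suc (Suc e)) + ?G r" using inc_count_block[OF r] M by simp
  consider "x < r" | "x = r" | "r < x" by linarith
  then show ?case
  proof cases
    case 1
    then have "?F (M - x) = (Suc n choose Suc (Suc e)) + ?G (r - x)"
      using inc_count_block[of "r - x" n "Suc e"] M r by (simp add: add_diff_assoc)
    moreover have "?G r \<le> ?G x + ?G (r - x)" using inc_count_subadditive[of "Suc e" x "r - x"] 1 by simp
    ultimately show ?thesis using F_M by simp
  next
    case 2
    show ?thesis
    proof (cases "Suc (Suc e) \<le> n")
      case True
      then show ?thesis using inc_count_binomial[OF True] F_M M 2 by simp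
    next
      case False
      have "Suc e \<le> n" using r by (metis binomial_eq_0_iff not_one_le_zero not_le le_trans)
      with False have "n = Suc e" by simp
      then show ?thesis using F_M 2 Suc.prems by simp
    qed
  next
    case 3
    then show ?thesis using inc_count_split_le_large[OF Suc.IH M r 3 Suc.prems(2)] by blast
  qed
qed
section \<open>Compressed families\<close>

lemma squashed_less_if_Max_in:
  assumes "finite u" "finite v" "L \<notin> u" "L \<in> v" "\<forall>x\<in>u \<union> v. x \<le> L"
  shows "squashed_less u v"
proof -
  have "Max ((u - v) \<union> (v - u)) = L" using assms by (intro Max_eqI) auto
  then show ?thesis using assms(3,4) unfolding squashed_less_def by auto
qed

lemma squashed_less_insert:
  assumes "L \<notin> u" "L \<notin> v" "squashed_less u v"
  shows "squashed_less (insert L u) (insert L v)"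
proof -
  have "(insert L u - insert L v) \<union> (insert L v - insert L u) = (u - v) \<union> (v - u)"
    using assms(1,2) by auto
  then show ?thesis using assms unfolding squashed_less_def by auto
qed

lemma squashed_less_bounded:
  assumes "finite u" "finite v" "squashed_less u v" "\<forall>x\<in>v. x < L"
  shows "\<forall>x\<in>u. x < L"
proof
  fix x assume "x \<in> u"
  let ?D = "(u - v) \<union> (v - u)"
  show "x < L"
  proof (cases "x \<in> v")
    case False
    with \<open>x \<in> u\<close> have "x \<le> Max ?D" using assms(1,2) by simp
    also have "Max ?D < L" using assms(3,4) unfolding squashed_less_def by auto
    finally show ?thesis .
  qed (use assms(4) in blast)
qed

lemma compressed_avoiding_Max:
  assumes C: "compressed (Suc e) F" and "F \<noteq> {}"
  defines "L \<equiv> Max (\<Union>F)"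
  shows "{u\<in>F. L \<notin> u} = {u. u \<subseteq> {1..<L} \<and> card u = Suc e}"
proof -
  have FB: "F \<subseteq> binom_N (Suc e)" and "finite F" using C unfolding compressed_def by auto
  note L = Max_Union_binom_N[OF this \<open>F \<noteq> {}\<close>, folded L_def]
  obtain v where v: "v \<in> F" "L \<in> v" using L(3) by blast
  show ?thesis
  proof (intro subset_antisym subsetI)
    fix u assume u: "u \<in> {u\<in>F. L \<notin> u}"
    then have "\<forall>x\<in>u. x < L" using below_if_avoiding[OF L(1)] by blast
    moreover have "\<forall>x\<in>u. 1 \<le> x" "card u = Suc e" using FB u unfolding binom_N_def by auto
    ultimately show "u \<in> {u. u \<subseteq> {1..<L} \<and> card u = Suc e}" by auto
  next
    fix u assume "u \<in> {u. u \<subseteq> {1..<L} \<and> card u = Suc e}"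
    then have u: "u \<subseteq> {1..<L}" "card u = Suc e" by auto
    then have "finite u" using finite_subset by blast
    with u have "u \<in> binom_N (Suc e)" unfolding binom_N_def by auto
    moreover have "squashed_less u v"
    proof (rule squashed_less_if_Max_in)
      show "finite v" using v(1) FB unfolding binom_N_def by auto
      show "\<forall>x\<in>u \<union> v. x \<le> L" using u(1) v(1) L(1) by auto
    qed (use \<open>finite u\<close> u(1) v(2) in auto)
    ultimately show "u \<in> {u\<in>F. L \<notin> u}" using C v(1) u(1) unfolding compressed_def by auto
  qed
qed

lemma compressed_link:
  assumes C: "compressed (Suc e) F" and "F \<noteq> {}"
  defines "L \<equiv> Max (\<Union>F)"
  shows "compressed e (link L F)"
  unfolding compressed_def
proof (intro conjI allI impI)
  have FB: "F \<subseteq> binom_N (Suc e)" and "finite F" using C unfolding compressed_def by auto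
  note L = Max_Union_binom_N[OF this \<open>F \<noteq> {}\<close>, folded L_def]
  show "finite (link L F)" using \<open>finite F\<close> unfolding link_def by simp
  show "link L F \<subseteq> binom_N e" by (rule link_binom_N[OF FB])
  fix w' w assume w: "w \<in> link L F" and w': "w' \<in> binom_N e" and less: "squashed_less w' w"
  obtain v where v: "v \<in> F" "L \<in> v" "w = v - {L}" using w unfolding link_def by auto
  have "\<forall>x\<in>w. x < L" using link_below[OF L(1)] w by blast
  moreover have "finite w" "finite w'" using v FB w' unfolding binom_N_def by auto
  ultimately have w'_below: "\<forall>x\<in>w'. x < L" using squashed_less_bounded less by blast
  have "insert L w' \<in> binom_N (Suc e)"
    using w' w'_below L(2) unfolding binom_N_def by auto
  moreover have "squashed_less (insert L w') v"
  proof -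
    have "L \<notin> w'" "L \<notin> w" "insert L w = v" using w'_below v by auto
    then show ?thesis using squashed_less_insert[OF _ _ less] by metis
  qed
  ultimately have "insert L w' \<in> F" using C v(1) unfolding compressed_def by blast
  moreover have "w' = insert L w' - {L}" using w'_below by auto
  ultimately show "w' \<in> link L F" unfolding link_def by blast
qed

lemma card_shift_image_compressed_le:
  "compressed d F \<Longrightarrow> card (shift_image F) \<le> inc_count d (card F)"
proof (induction d arbitrary: F)
  case 0
  then show ?case using shift_image_binom_N_0 unfolding compressed_def by simp
next
  case (Suc e)
  show ?case
  proof (cases "F = {}")
    case True
    then show ?thesis unfolding shift_image_def by simp
  next
    case False
    have FB: "F \<subseteq> binom_N (Suc e)" and "finite F" using Suc.prems unfolding compressed_def by auto
    define L where "L = Max (\<Union>F)"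
    note L = Max_Union_binom_N[OF FB \<open>finite F\<close> False, folded L_def]
    note split = split_at_Max[OF FB \<open>finite F\<close> False, folded L_def]
    have "card F = ((L - 1) choose Suc e) + card (link L F)"
      using split(2) compressed_avoiding_Max[OF Suc.prems False, folded L_def]
        n_subsets[of "{1..<L}" "Suc e"] by simp
    then have "inc_count (Suc e) (card F) = (L choose Suc e) + inc_count e (card (link L F))"
      using inc_count_block[OF split(3) card_link_le[OF FB L(1)]] L(2) by simp
    moreover have "card (shift_image (link L F)) \<le> inc_count e (card (link L F))"
      using Suc.IH[OF compressed_link[OF Suc.prems False]] unfolding L_def .
    ultimately show ?thesis using split(1) card_shift_image_low_le[OF FB L(1)] by linarith
  qed
qed
section \<open>Arbitrary families\<close>

lemma inc_count_le_card_shift_image: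
  "F \<subseteq> binom_N d \<Longrightarrow> finite F \<Longrightarrow> inc_count d (card F) \<le> card (shift_image F)"
proof (induction d arbitrary: F)
  case 0
  then show ?case using shift_image_binom_N_0 by simp
next
  case (Suc e)
  from Suc.prems show ?case
  proof (induction "card F" arbitrary: F rule: less_induct)
    case less
    show ?case
    proof (cases "F = {}")
      case True
      then show ?thesis by simp
    next
      case False
      define L where "L = Max (\<Union>F)"
      note L = Max_Union_binom_N[OF less.prems False, folded L_def]
      note split = split_at_Max[OF less.prems False, folded L_def]
      let ?R = "{u\<in>F. L \<notin> u}"
      let ?low = "shift_image ?R \<union> {u\<in>F. L \<in> u}"
      have IH_R: "inc_count (Suc e) (card ?R) \<le> card (shift_image ?R)"
      proof (rule less.hyps)
        show "card ?R < card F" using split(2,3) by simp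
      qed (use less.prems in auto)
      have IH_link: "inc_count e (card (link L F)) \<le> card (shift_image (link L F))"
        using Suc.IH[OF link_binom_N[OF less.prems(1)]] less.prems(2) unfolding link_def by simp
      have "finite ?low"
        using finite_shift_image_bounded[OF below_if_avoiding[OF L(1)]] less.prems(2) by simp
      moreover have "shift_image ?R \<subseteq> ?low" "F \<subseteq> ?low"
        using subset_shift_image[of ?R] less.prems(1) unfolding binom_N_def by auto
      ultimately have "card (shift_image ?R) \<le> card ?low" "card F \<le> card ?low"
        by (simp_all add: card_mono)
      with IH_R have max_le: "max (inc_count (Suc e) (card ?R)) (card F) \<le> card ?low" by simp
      have "inc_count (Suc e) (card F)
          \<le> inc_count e (card (link L F)) + max (inc_count (Suc e) (card ?R)) (card F)"
        using inc_count_split_le[OF split(3), of "card F"] split(2) by simp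
      also have "\<dots> \<le> card (shift_image (link L F)) + card ?low"
        using IH_link max_le by (rule add_mono)
      also have "\<dots> = card (shift_image F)" using split(1) by simp
      finally show ?thesis .
    qed
  qed
qed

theorem theorem1p4:
  fixes d :: nat and F :: "nat set set"
  assumes "d \<ge> 1" and "compressed d F"
  shows "\<forall>F'. F' \<subseteq> binom_N d \<and> finite F' \<and> card F' = card F
           \<longrightarrow> card (Inc_image F') \<ge> card (Inc_image F)"
proof (intro allI impI)
  fix F' assume F': "F' \<subseteq> binom_N d \<and> finite F' \<and> card F' = card F"
  have "F \<subseteq> binom_N d" using assms(2) unfolding compressed_def by simp
  then have "card (Inc_image F) = card (shift_image F)"
    by (subst Inc_image_eq_shift_image) (auto simp: binom_N_def)
  also have "\<dots> \<le> inc_count d (card F)" by (rule card_shift_image_compressed_le[OF assms(2)])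
  also have "\<dots> \<le> card (shift_image F')" using inc_count_le_card_shift_image[of F' d] F' by simp
  also have "\<dots> = card (Inc_image F')"
    using F' by (subst Inc_image_eq_shift_image) (auto simp: binom_N_def)
  finally show "card (Inc_image F') \<ge> card (Inc_image F)" .
qed

end
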